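(* Let $p$ be a prime and $m\ge 0$ an integer. Let $C_m=\{a\in\mathbb{Z}_p:\delta^m a=0\}$; the reduction map $C_m\to\mathbb{Z}_p/p^m\mathbb{Z}_p$ is a bijection, so for each $\alpha\in I=\{0,1,\dots,p^m-1\}$ there is a unique $a_\alpha\in C_m$ with $a_\alpha\equiv\alpha \pmod{p^m}$. Let $I'=\{\beta=(\beta_0,\dots,\beta_{m-1})\in\mathbb{Z}^m:0\le\beta_0,\dots,\beta_{m-1}\le p-1\}$ (a set with $p^m$ elements), fix any ordering of $I'$, and let $W=(w_{\alpha\beta})_{\alpha\in I,\beta\in I'}$ be the square matrix with entries $w_{\alpha\beta}=(a_\alpha)^{\beta_0}(\delta a_\alpha)^{\beta_1}\cdots(\delta^{m-1}a_\alpha)^{\beta_{m-1}}\in\mathbb{Z}_p$, with the convention $b^0=1$ for all $b\in\mathbb{Z}_p$. Then $\det W$ is a unit in $\mathbb{Z}_p$.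
   Context: $\mathbb{Z}_p$ is the ring of $p$-adic integers, $\delta:\mathbb{Z}_p\to\mathbb{Z}_p$ is the Fermat quotient operator $\delta a=(a-a^p)/p$, and $\delta^i$ is its $i$-th iterate. (Changing the ordering of $I'$ only changes $\det W$ by a sign.) *)

theory Defs
  imports "HOL-Number_Theory.Number_Theory"
          "Berlekamp_Zassenhaus.Finite_Field"
          "Jordan_Normal_Form.Determinant"
begin

text \<open>An element of Z_p is represented by its sequence of reductions x n in
  {0..<p^n} (the residue mod p^n), with x (Suc n) mod p^n = x n.
  The prime p is encoded as the cardinality of the finite type 'p.\<close>

typedef (overloaded) ('p::finite) padic =
  "{x :: nat \<Rightarrow> int. \<forall>n. 0 \<le> x n \<and> x n < int CARD('p) ^ n \<and> x (Suc n) mod int CARD('p) ^ n = x n}"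
  by (rule exI[of _ "\<lambda>_. 0"]) auto

setup_lifting type_definition_padic

lemma card_pos_int: "0 < int CARD('p::finite) ^ n"
  by simp

lemma padic_coh_op:
  fixes p :: int
  assumes "0 < p"
    and "a' mod p ^ n = a" and "b' mod p ^ n = b"
    and op: "\<And>u v u' v'. u mod p ^ n = u' mod p ^ n \<Longrightarrow> v mod p ^ n = v' mod p ^ n
                     \<Longrightarrow> f u v mod p ^ n = f u' v' mod p ^ n"
  shows "(f a' b' mod p ^ Suc n) mod p ^ n = f a b mod p ^ n"
proof -
  have "p ^ n dvd p ^ Suc n" by simp
  then have "(f a' b' mod p ^ Suc n) mod p ^ n = f a' b' mod p ^ n"
    by (rule mod_mod_cancel)
  also have "\<dots> = f a b mod p ^ n"
    by (rule op) (use assms in auto)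
  finally show ?thesis .
qed

instantiation padic :: (prime_card) comm_ring_1
begin

lift_definition zero_padic :: "'a padic" is "\<lambda>n. 0" by auto

lift_definition one_padic :: "'a padic" is "\<lambda>n. 1 mod int CARD('a) ^ n"
proof (intro allI conjI)
  fix n
  have p: "0 < int CARD('a) ^ n" by simp
  show "0 \<le> 1 mod int CARD('a) ^ n" using p by simp
  show "1 mod int CARD('a) ^ n < int CARD('a) ^ n" using p by simp
  have "int CARD('a) ^ n dvd int CARD('a) ^ Suc n" by simp
  then show "1 mod int CARD('a) ^ Suc n mod int CARD('a) ^ n = 1 mod int CARD('a) ^ n"
    by (rule mod_mod_cancel)
qed

lift_definition plus_padic :: "'a padic \<Rightarrow> 'a padic \<Rightarrow> 'a padic"
  is "\<lambda>x y n. (x n + y n) mod int CARD('a) ^ n"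
proof (intro allI conjI)
  fix x y :: "nat \<Rightarrow> int" and n
  assume x: "\<And>n. 0 \<le> x n \<and> x n < int CARD('a) ^ n \<and> x (Suc n) mod int CARD('a) ^ n = x n"
     and y: "\<And>n. 0 \<le> y n \<and> y n < int CARD('a) ^ n \<and> y (Suc n) mod int CARD('a) ^ n = y n"
  have p: "0 < int CARD('a) ^ n" by simp
  show "0 \<le> (x n + y n) mod int CARD('a) ^ n" using p by simp
  show "(x n + y n) mod int CARD('a) ^ n < int CARD('a) ^ n" using p by simp
  show "(x (Suc n) + y (Suc n)) mod int CARD('a) ^ Suc n mod int CARD('a) ^ n =
        (x n + y n) mod int CARD('a) ^ n"
    by (rule padic_coh_op[where f = "(+)"]) (use x y in \<open>auto intro: mod_add_cong\<close>)
qed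

lift_definition uminus_padic :: "'a padic \<Rightarrow> 'a padic"
  is "\<lambda>x n. (- x n) mod int CARD('a) ^ n"
proof (intro allI conjI)
  fix x :: "nat \<Rightarrow> int" and n
  assume x: "\<And>n. 0 \<le> x n \<and> x n < int CARD('a) ^ n \<and> x (Suc n) mod int CARD('a) ^ n = x n"
  have p: "0 < int CARD('a) ^ n" by simp
  show "0 \<le> (- x n) mod int CARD('a) ^ n" using p by simp
  show "(- x n) mod int CARD('a) ^ n < int CARD('a) ^ n" using p by simp
  show "(- x (Suc n)) mod int CARD('a) ^ Suc n mod int CARD('a) ^ n =
        (- x n) mod int CARD('a) ^ n"
  proof -
    have "int CARD('a) ^ n dvd int CARD('a) ^ Suc n" by simp
    then have "(- x (Suc n)) mod int CARD('a) ^ Suc n mod int CARD('a) ^ n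
               = (- x (Suc n)) mod int CARD('a) ^ n" by (rule mod_mod_cancel)
    also have "\<dots> = (- x n) mod int CARD('a) ^ n"
      using x[of n] by (metis mod_minus_eq)
    finally show ?thesis .
  qed
qed

lift_definition minus_padic :: "'a padic \<Rightarrow> 'a padic \<Rightarrow> 'a padic"
  is "\<lambda>x y n. (x n - y n) mod int CARD('a) ^ n"
proof (intro allI conjI)
  fix x y :: "nat \<Rightarrow> int" and n
  assume x: "\<And>n. 0 \<le> x n \<and> x n < int CARD('a) ^ n \<and> x (Suc n) mod int CARD('a) ^ n = x n"
     and y: "\<And>n. 0 \<le> y n \<and> y n < int CARD('a) ^ n \<and> y (Suc n) mod int CARD('a) ^ n = y n"
  have p: "0 < int CARD('a) ^ n" by simp
  show "0 \<le> (x n - y n) mod int CARD('a) ^ n" using p by simp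
  show "(x n - y n) mod int CARD('a) ^ n < int CARD('a) ^ n" using p by simp
  show "(x (Suc n) - y (Suc n)) mod int CARD('a) ^ Suc n mod int CARD('a) ^ n =
        (x n - y n) mod int CARD('a) ^ n"
    by (rule padic_coh_op[where f = "(-)"]) (use x y in \<open>auto intro: mod_diff_cong\<close>)
qed

lift_definition times_padic :: "'a padic \<Rightarrow> 'a padic \<Rightarrow> 'a padic"
  is "\<lambda>x y n. (x n * y n) mod int CARD('a) ^ n"
proof (intro allI conjI)
  fix x y :: "nat \<Rightarrow> int" and n
  assume x: "\<And>n. 0 \<le> x n \<and> x n < int CARD('a) ^ n \<and> x (Suc n) mod int CARD('a) ^ n = x n"
     and y: "\<And>n. 0 \<le> y n \<and> y n < int CARD('a) ^ n \<and> y (Suc n) mod int CARD('a) ^ n = y n"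
  have p: "0 < int CARD('a) ^ n" by simp
  show "0 \<le> (x n * y n) mod int CARD('a) ^ n" using p by simp
  show "(x n * y n) mod int CARD('a) ^ n < int CARD('a) ^ n" using p by simp
  show "(x (Suc n) * y (Suc n)) mod int CARD('a) ^ Suc n mod int CARD('a) ^ n =
        (x n * y n) mod int CARD('a) ^ n"
    by (rule padic_coh_op[where f = "(*)"]) (use x y in \<open>auto intro: mod_mult_cong\<close>)
qed

instance
proof
  fix a b c :: "'a padic"
  show "a * b * c = a * (b * c)"
    by transfer (simp add: mod_mult_left_eq mod_mult_right_eq mult.assoc)
  show "a * b = b * a" by transfer (simp add: mult.commute)
  show "1 * a = a"
    by transfer (simp add: mod_mult_left_eq fun_eq_iff mod_pos_pos_trivial)
  show "a + b + c = a + (b + c)"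
    by transfer (simp add: mod_add_left_eq mod_add_right_eq add.assoc)
  show "a + b = b + a" by transfer (simp add: add.commute)
  show "0 + a = a" by transfer (simp add: fun_eq_iff mod_pos_pos_trivial)
  show "- a + a = 0"
    by transfer (simp add: mod_add_left_eq)
  show "a - b = a + - b"
    by transfer (simp add: mod_add_right_eq)
  show "(a + b) * c = a * c + b * c"
    by transfer (simp add: mod_mult_left_eq mod_add_eq distrib_right)
  show "(0::'a padic) \<noteq> 1"
  proof transfer
    have "1 < int CARD('a)" using prime_card_int[where 'a='a] prime_gt_1_int by blast
    then show "(\<lambda>n. 0) \<noteq> (\<lambda>n. 1 mod int CARD('a) ^ n)"
      by (auto simp: fun_eq_iff intro!: exI[of _ 1])
  qed
qed

end

lemma prime_dvd_self_minus_pow: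
  fixes a :: int
  assumes "prime (int p)" "0 \<le> a"
  shows "int p dvd a - a ^ p"
proof -
  obtain k where k: "a = int k" using assms(2) nonneg_eq_int by blast
  have pp: "prime p" using assms(1) by simp
  have p0: "0 < p" using pp prime_gt_0_nat by blast
  have kp: "k ^ p = k * k ^ (p - 1)"
    using p0 by (cases p) simp_all
  have "[k ^ p = k] (mod p)"
  proof (cases "p dvd k")
    case True
    have "k dvd k ^ p" using kp by simp
    then have "p dvd k ^ p" using True by (rule dvd_trans[rotated])
    then show ?thesis using True by (simp add: cong_def dvd_eq_mod_eq_0)
  next
    case False
    then have "[k ^ (p - 1) = 1] (mod p)" using fermat_theorem pp by blast
    then have "[k * k ^ (p - 1) = k * 1] (mod p)" by (rule cong_scalar_left)
    then show ?thesis using kp by simp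
  qed
  then have "[int k ^ p = int k] (mod int p)"
    by (simp add: cong_int_iff[symmetric])
  then have "int p dvd int k - int k ^ p"
    by (simp add: cong_iff_dvd_diff dvd_diff_commute)
  then show ?thesis using k by simp
qed

text \<open>(a - a^p)/p: its reduction mod p^n is obtained from the reduction mod p^(n+1)
  of a - a^p (which is divisible by p) by dividing by p.\<close>

lift_definition delta :: "'p::prime_card padic \<Rightarrow> 'p padic"
  is "\<lambda>a n. ((a (Suc n) - a (Suc n) ^ CARD('p)) mod int CARD('p) ^ Suc n) div int CARD('p)"
proof (intro allI conjI)
  fix a :: "nat \<Rightarrow> int" and n
  assume a: "\<And>n. 0 \<le> a n \<and> a n < int CARD('p) ^ n \<and> a (Suc n) mod int CARD('p) ^ n = a n"
  define p where "p = int CARD('p)"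
  have p1: "1 < p" unfolding p_def using prime_card_int[where 'a='p] prime_gt_1_int by blast
  define y where "y = (\<lambda>k. (a k - a k ^ CARD('p)) mod p ^ k)"
  have ydvd: "p dvd y (Suc k)" for k
  proof -
    have "p dvd a (Suc k) - a (Suc k) ^ CARD('p)"
      unfolding p_def by (rule prime_dvd_self_minus_pow) (use a prime_card_int[where 'a='p] in auto)
    moreover have "p dvd p ^ Suc k" by simp
    ultimately show ?thesis unfolding y_def by (simp add: dvd_mod)
  qed
  have y0: "0 \<le> y k" "y k < p ^ k" for k unfolding y_def using p1 by auto
  have "0 \<le> y (Suc n) div p" using y0(1)[of "Suc n"] p1 by (simp add: pos_imp_zdiv_nonneg_iff)
  then show "0 \<le> (a (Suc n) - a (Suc n) ^ CARD('p)) mod int CARD('p) ^ Suc n div int CARD('p)"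
    unfolding y_def p_def .
  have "y (Suc n) div p < p ^ n"
  proof -
    obtain q where q: "y (Suc n) = p * q" using ydvd by blast
    have "p * q < p * p ^ n" using y0(2)[of "Suc n"] q by simp
    then have "q < p ^ n" using p1 mult_less_cancel_left_pos[of p q "p ^ n"] by simp
    then show ?thesis using q p1 by simp
  qed
  then show "(a (Suc n) - a (Suc n) ^ CARD('p)) mod int CARD('p) ^ Suc n div int CARD('p)
             < int CARD('p) ^ n" unfolding y_def p_def .
  have coh: "y (Suc (Suc n)) mod p ^ Suc n = y (Suc n)"
  proof -
    have "p ^ Suc n dvd p ^ Suc (Suc n)" by (simp add: le_imp_power_dvd)
    then have "y (Suc (Suc n)) mod p ^ Suc n
        = (a (Suc (Suc n)) - a (Suc (Suc n)) ^ CARD('p)) mod p ^ Suc n"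
      unfolding y_def by (rule mod_mod_cancel)
    also have "\<dots> = y (Suc n)"
    proof -
      have e1: "a (Suc (Suc n)) mod p ^ Suc n = a (Suc n) mod p ^ Suc n"
        using a[of "Suc n"] a[of "Suc n"] by (simp add: p_def mod_pos_pos_trivial)
      then have e2: "a (Suc (Suc n)) ^ CARD('p) mod p ^ Suc n = a (Suc n) ^ CARD('p) mod p ^ Suc n"
        by (metis power_mod)
      show ?thesis unfolding y_def by (rule mod_diff_cong[OF e1 e2])
    qed
    finally show ?thesis .
  qed
  obtain q where q: "y (Suc (Suc n)) = p * q" using ydvd by blast
  obtain r where r: "y (Suc n) = p * r" using ydvd by blast
  have "p * q mod (p * p ^ n) = p * (q mod p ^ n)" by (rule mod_mult_mult1)
  then have "p * (q mod p ^ n) = p * r"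
    using coh q r by simp
  then have "q mod p ^ n = r" using p1 by simp
  then have "(y (Suc (Suc n)) div p) mod p ^ n = y (Suc n) div p"
    using q r p1 by simp
  then show "(a (Suc (Suc n)) - a (Suc (Suc n)) ^ CARD('p)) mod int CARD('p) ^ Suc (Suc n)
              div int CARD('p) mod int CARD('p) ^ n =
             (a (Suc n) - a (Suc n) ^ CARD('p)) mod int CARD('p) ^ Suc n div int CARD('p)"
    unfolding y_def p_def .
qed

end

theory Submission
  imports Defs
begin

text \<open>Reduce modulo p. The map sending x mod p^m to the residues mod p of
  x, delta x, ..., delta^(m-1) x is injective, because x mod p together with delta x mod p^n
  determines x mod p^(n+1); so it is a bijection from Z/p^m onto F_p^m. Hence the rows of
  W mod p are the evaluations, at all points of F_p^m, of the p^m monomials with every exponent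
  below p. A kernel vector would be a polynomial of degree below p in each variable vanishing on
  all of F_p^m, hence zero. So det W is nonzero mod p, i.e. a unit of Z_p.\<close>

lemma Rep_padic_bounds:
  fixes x :: "'p::prime_card padic"
  shows "0 \<le> Rep_padic x n" "Rep_padic x n < int CARD('p) ^ n"
  using Rep_padic[of x] by auto

lemma Rep_padic_mod:
  fixes x :: "'p::prime_card padic"
  assumes "k \<le> n"
  shows "Rep_padic x n mod int CARD('p) ^ k = Rep_padic x k"
  using assms
proof (induction n rule: dec_induct)
  case base
  then show ?case using Rep_padic_bounds[of x k] by simp
next
  case (step n)
  have "int CARD('p) ^ k dvd int CARD('p) ^ n"
    using \<open>k \<le> n\<close> by (simp add: le_imp_power_dvd)
  then have "Rep_padic x (Suc n) mod int CARD('p) ^ k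
      = Rep_padic x (Suc n) mod int CARD('p) ^ n mod int CARD('p) ^ k"
    by (simp add: mod_mod_cancel)
  then show ?case using step Rep_padic[of x] by simp
qed

lemma padic_eqI:
  fixes x y :: "'p::prime_card padic"
  shows "(\<And>n. Rep_padic x n = Rep_padic y n) \<Longrightarrow> x = y"
  using Rep_padic_inject by (metis ext)

lemma Rep_padic_of_nat:
  "Rep_padic (of_nat k :: 'p::prime_card padic) n = int k mod int CARD('p) ^ n"
proof (induction k)
  case 0
  then show ?case by (simp add: zero_padic.rep_eq)
next
  case (Suc k)
  have "(of_nat (Suc k) :: 'p padic) = 1 + of_nat k" by simp
  then show ?case
    using Suc by (simp add: plus_padic.rep_eq one_padic.rep_eq mod_simps add.commute)
qed

lemma Rep_padic_eq_if_cong: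
  fixes b c :: "'p::prime_card padic"
  assumes "\<alpha> < CARD('p) ^ m" "b - of_nat \<alpha> = of_nat (CARD('p) ^ m) * c"
  shows "Rep_padic b m = int \<alpha>"
proof -
  let ?q = "int CARD('p) ^ m"
  have "(Rep_padic b m - int \<alpha> mod ?q) mod ?q = Rep_padic (of_nat (CARD('p) ^ m) * c) m"
    using assms(2) by (metis minus_padic.rep_eq Rep_padic_of_nat)
  also have "\<dots> = 0"
    unfolding times_padic.rep_eq Rep_padic_of_nat by (simp add: mod_simps)
  finally have "[Rep_padic b m = int \<alpha>] (mod ?q)"
    by (simp add: mod_diff_right_eq cong_iff_dvd_diff mod_eq_0_iff_dvd)
  moreover have "int \<alpha> < ?q" using assms(1) by (metis of_nat_less_iff of_nat_power)
  ultimately show ?thesis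
    using Rep_padic_bounds[of b m] by (intro cong_less_imp_eq_int) auto
qed

lemma power_Suc_dvd_power_diff:
  fixes X Y P :: int
  assumes "P ^ n dvd X - Y" "P dvd X - Y" "P dvd int q"
  shows "P ^ Suc n dvd X ^ q - Y ^ q"
proof -
  have XY: "[X = Y] (mod P)" using assms(2) by (simp add: cong_iff_dvd_diff)
  have "[(\<Sum>i<q. Y ^ (q - Suc i) * X ^ i) = (\<Sum>i<q. Y ^ (q - Suc i) * Y ^ i)] (mod P)"
    by (intro cong_sum cong_scalar_left cong_pow XY)
  moreover have "(\<Sum>i<q. Y ^ (q - Suc i) * Y ^ i) = int q * Y ^ (q - 1)"
  proof -
    have "Y ^ (q - Suc i) * Y ^ i = Y ^ (q - 1)" if "i < q" for i
    proof -
      have "q - Suc i + i = q - 1" using that by simp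
      then show ?thesis by (metis power_add)
    qed
    then show ?thesis by simp
  qed
  ultimately have "P dvd (\<Sum>i<q. Y ^ (q - Suc i) * X ^ i)"
    using cong_dvd_iff assms(3) by fastforce
  with assms(1) have "P ^ n * P dvd (X - Y) * (\<Sum>i<q. Y ^ (q - Suc i) * X ^ i)"
    by (intro mult_dvd_mono)
  then show ?thesis by (simp add: power_diff_sumr2 mult.commute)
qed

lemma Rep_padic_delta:
  fixes x :: "'p::prime_card padic" and n :: nat
  defines "X \<equiv> Rep_padic x (Suc n)"
  shows "int CARD('p) * Rep_padic (delta x) n = (X - X ^ CARD('p)) mod int CARD('p) ^ Suc n"
proof -
  have "int CARD('p) dvd X - X ^ CARD('p)"
    unfolding X_def
    by (rule prime_dvd_self_minus_pow[OF prime_card_int[where 'a='p]]) (simp add: Rep_padic_bounds)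
  then have "int CARD('p) dvd (X - X ^ CARD('p)) mod int CARD('p) ^ Suc n"
    by (simp add: dvd_mod)
  then show ?thesis unfolding delta.rep_eq X_def by simp
qed

lemma Rep_padic_Suc_eq_if_delta:
  fixes x y :: "'p::prime_card padic"
  assumes one: "Rep_padic x 1 = Rep_padic y 1"
    and n: "Rep_padic x n = Rep_padic y n"
    and delta: "Rep_padic (delta x) n = Rep_padic (delta y) n"
  shows "Rep_padic x (Suc n) = Rep_padic y (Suc n)"
proof -
  let ?P = "int CARD('p)"
  define X where "X = Rep_padic x (Suc n)"
  define Y where "Y = Rep_padic y (Suc n)"
  have "[X = Y] (mod ?P ^ n)" "[X = Y] (mod ?P ^ 1)"
    using one n Rep_padic_mod[of n "Suc n" x] Rep_padic_mod[of n "Suc n" y]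
      Rep_padic_mod[of 1 "Suc n" x] Rep_padic_mod[of 1 "Suc n" y]
    unfolding X_def Y_def cong_def by simp_all
  then have "?P ^ Suc n dvd X ^ CARD('p) - Y ^ CARD('p)"
    by (intro power_Suc_dvd_power_diff) (simp_all add: cong_iff_dvd_diff)
  moreover have "[X - X ^ CARD('p) = Y - Y ^ CARD('p)] (mod ?P ^ Suc n)"
    using Rep_padic_delta[of x n] Rep_padic_delta[of y n] delta
    unfolding X_def Y_def cong_def by simp
  ultimately have "?P ^ Suc n dvd (X - X ^ CARD('p)) - (Y - Y ^ CARD('p))
      + (X ^ CARD('p) - Y ^ CARD('p))"
    by (intro dvd_add) (simp_all add: cong_iff_dvd_diff)
  also have "(X - X ^ CARD('p)) - (Y - Y ^ CARD('p)) + (X ^ CARD('p) - Y ^ CARD('p)) = X - Y"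
    by simp
  finally have "[X = Y] (mod ?P ^ Suc n)" by (simp add: cong_iff_dvd_diff)
  then show ?thesis
    using Rep_padic_bounds[of x "Suc n"] Rep_padic_bounds[of y "Suc n"] unfolding X_def Y_def
    by (intro cong_less_imp_eq_int) auto
qed

lemma Rep_padic_eq_if_delta_residues:
  fixes x y :: "'p::prime_card padic"
  assumes "\<And>i. i < n \<Longrightarrow> Rep_padic ((delta ^^ i) x) 1 = Rep_padic ((delta ^^ i) y) 1"
  shows "Rep_padic x n = Rep_padic y n"
  using assms
proof (induction n arbitrary: x y)
  case 0
  then show ?case using Rep_padic_bounds[of x 0] Rep_padic_bounds[of y 0] by simp
next
  case (Suc n)
  show ?case
  proof (rule Rep_padic_Suc_eq_if_delta)
    show "Rep_padic x 1 = Rep_padic y 1" using Suc.prems[of 0] by simp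
    show "Rep_padic x n = Rep_padic y n" by (rule Suc.IH) (rule Suc.prems, simp)
    show "Rep_padic (delta x) n = Rep_padic (delta y) n"
      by (rule Suc.IH) (metis Suc.prems Suc_mono funpow_Suc_right o_apply)
  qed
qed

definition reduce_padic :: "'p::prime_card padic \<Rightarrow> 'p mod_ring" where
  "reduce_padic x = of_int_mod_ring (Rep_padic x 1)"

lemma reduce_padic_hom: "comm_ring_hom (reduce_padic :: 'p::prime_card padic \<Rightarrow> 'p mod_ring)"
proof
  fix x y :: "'p padic"
  show "reduce_padic (x + y) = reduce_padic x + reduce_padic y"
    unfolding reduce_padic_def plus_padic.rep_eq by transfer (simp add: mod_simps)
  show "reduce_padic (x * y) = reduce_padic x * reduce_padic y"
    unfolding reduce_padic_def times_padic.rep_eq by transfer (simp add: mod_simps)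
  show "reduce_padic (1 :: 'p padic) = 1"
    unfolding reduce_padic_def one_padic.rep_eq by transfer simp
  show "reduce_padic (0 :: 'p padic) = 0"
    unfolding reduce_padic_def zero_padic.rep_eq by transfer simp
qed

lemma reduce_padic_eq_iff:
  "reduce_padic (x :: 'p::prime_card padic) = reduce_padic y \<longleftrightarrow> Rep_padic x 1 = Rep_padic y 1"
  unfolding reduce_padic_def using Rep_padic_bounds[of x 1] Rep_padic_bounds[of y 1]
  by (metis power_one_right to_int_mod_ring_of_int_mod_ring)

lemma padic_unit_if_reduce_nonzero:
  fixes x :: "'p::prime_card padic"
  assumes "reduce_padic x \<noteq> 0"
  shows "x dvd 1"
proof -
  let ?P = "int CARD('p)"
  have not_dvd: "\<not> ?P dvd Rep_padic x n" if "0 < n" for n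
  proof
    assume "?P dvd Rep_padic x n"
    then have "?P dvd Rep_padic x n mod ?P ^ 1" by (simp add: dvd_mod)
    then have "?P dvd Rep_padic x 1" using Rep_padic_mod[of 1 n x] that by simp
    then have "Rep_padic x 1 = 0"
      using Rep_padic_bounds[of x 1] by (metis power_one_right mod_pos_pos_trivial dvd_imp_mod_0)
    then have "reduce_padic x = 0" unfolding reduce_padic_def by transfer simp
    with assms show False by contradiction
  qed
  have coprime_Rep: "coprime (Rep_padic x n) (?P ^ n)" for n
  proof (cases "n = 0")
    case False
    with not_dvd have "coprime ?P (Rep_padic x n)"
      by (intro prime_imp_coprime prime_card_int) simp
    then show ?thesis by (simp add: coprime_commute[of "Rep_padic x n"])
  qed simp
  define inv_mod where
    "inv_mod n z \<longleftrightarrow> 0 \<le> z \<and> z < ?P ^ n \<and> [Rep_padic x n * z = 1] (mod ?P ^ n)" for n z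
  have "\<forall>n. \<exists>z. inv_mod n z"
  proof
    fix n
    obtain z where "[Rep_padic x n * z = 1] (mod ?P ^ n)"
      using cong_solve_coprime_int[OF coprime_Rep] by blast
    then have "[Rep_padic x n * (z mod ?P ^ n) = 1] (mod ?P ^ n)"
      by (simp add: cong_def mod_mult_right_eq)
    then show "\<exists>z. inv_mod n z" unfolding inv_mod_def by (intro exI[of _ "z mod ?P ^ n"]) simp
  qed
  from choice[OF this] obtain y where y: "\<And>n. inv_mod n (y n)" by blast
  have y_coherent: "y (Suc n) mod ?P ^ n = y n" for n
  proof (rule cong_less_imp_eq_int)
    have "[Rep_padic x (Suc n) * y (Suc n) = 1] (mod ?P ^ Suc n)"
      using y[of "Suc n"] unfolding inv_mod_def by simp
    then have inv_Suc: "[Rep_padic x (Suc n) * y (Suc n) = 1] (mod ?P ^ n)"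
      by (rule cong_dvd_modulus) (simp add: le_imp_power_dvd)
    have "Rep_padic x n * (y (Suc n) mod ?P ^ n) mod ?P ^ n
        = Rep_padic x (Suc n) mod ?P ^ n * (y (Suc n) mod ?P ^ n) mod ?P ^ n"
      using Rep_padic_mod[of n "Suc n" x] by simp
    then have "[Rep_padic x n * (y (Suc n) mod ?P ^ n) = Rep_padic x (Suc n) * y (Suc n)] (mod ?P ^ n)"
      unfolding cong_def mod_mult_eq .
    also note inv_Suc
    also have "[1 = Rep_padic x n * y n] (mod ?P ^ n)"
      using y[of n] unfolding inv_mod_def by (blast intro: cong_sym)
    finally show "[y (Suc n) mod ?P ^ n = y n] (mod ?P ^ n)"
      using cong_mult_lcancel[OF coprime_Rep[of n]] by blast
  qed (use y[of n] in \<open>simp_all add: inv_mod_def\<close>)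
  define z :: "'p padic" where "z = Abs_padic y"
  have "Rep_padic z = y"
    unfolding z_def using y y_coherent by (intro Abs_padic_inverse) (simp add: inv_mod_def)
  then have "x * z = 1"
    using y by (intro padic_eqI) (simp add: times_padic.rep_eq one_padic.rep_eq inv_mod_def cong_def)
  then show ?thesis by (metis dvdI)
qed

lemma sum_powers_vanishing_imp_coeffs_zero:
  fixes c :: "nat \<Rightarrow> 'p::prime_card mod_ring"
  assumes "\<And>t. (\<Sum>k<CARD('p). c k * t ^ k) = 0"
  shows "\<forall>k<CARD('p). c k = 0"
proof -
  define Q where "Q = (\<Sum>k<CARD('p). monom (c k) k)"
  have coeff_Q: "coeff Q n = (if n < CARD('p) then c n else 0)" for n
    unfolding Q_def coeff_sum by (simp add: coeff_monom)
  have p: "1 < CARD('p)" using prime_card[where 'a='p] prime_gt_1_nat by blast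
  have "Q = 0"
  proof (rule poly_eqI_degree[of UNIV])
    show "poly Q t = poly 0 t" for t
      using assms unfolding Q_def poly_sum by (simp add: poly_monom)
    have "degree Q \<le> CARD('p) - 1"
      by (rule degree_le) (use p in \<open>auto simp: coeff_Q\<close>)
    then show "degree Q < card (UNIV :: 'p mod_ring set)" using p by simp
  qed (use p in simp)
  then show ?thesis using coeff_Q by (metis coeff_0)
qed

lemma sum_lessThan_mult_split:
  fixes g :: "nat \<Rightarrow> 'a::comm_monoid_add"
  shows "(\<Sum>j<N * q. g j) = (\<Sum>k<q. \<Sum>l<N. g (l * q + k))"
proof -
  have "(\<Sum>j<N * q. g j) = (\<Sum>l<N. \<Sum>j\<in>{l * q..<l * q + q}. g j)"
    by (rule sum.nat_group[symmetric])
  also have "\<dots> = (\<Sum>l<N. \<Sum>k<q. g (l * q + k))"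
  proof (rule sum.cong[OF refl])
    fix l
    show "(\<Sum>j\<in>{l * q..<l * q + q}. g j) = (\<Sum>k<q. g (l * q + k))"
      using sum.shift_bounds_nat_ivl[where g=g and m=0 and k="l * q" and n=q]
      by (simp add: atLeast0LessThan add.commute)
  qed
  also have "\<dots> = (\<Sum>k<q. \<Sum>l<N. g (l * q + k))" by (rule sum.swap)
  finally show ?thesis .
qed

lemma digit_mult_add:
  fixes q l k :: nat
  assumes "k < q"
  shows "(l * q + k) div q ^ Suc i mod q = l div q ^ i mod q"
    and "(l * q + k) div q ^ 0 mod q = k"
proof -
  have "(l * q + k) div q = l" using assms by simp
  then show "(l * q + k) div q ^ Suc i mod q = l div q ^ i mod q"
    by (simp add: div_mult2_eq power_Suc)
  show "(l * q + k) div q ^ 0 mod q = k" using assms by simp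
qed

text \<open>Column j of W carries the monomial whose exponents are the base-p digits of j.\<close>

lemma digit_monomials_independent:
  fixes c :: "nat \<Rightarrow> 'p::prime_card mod_ring"
  assumes "\<And>y. (\<Sum>j<CARD('p) ^ m. c j * (\<Prod>i<m. y i ^ (j div CARD('p) ^ i mod CARD('p)))) = 0"
  shows "\<forall>j<CARD('p) ^ m. c j = 0"
  using assms
proof (induction m arbitrary: c)
  case 0
  then show ?case by simp
next
  case (Suc m)
  let ?p = "CARD('p)"
  have "\<forall>l<?p ^ m. c (l * ?p + k) = 0" if k: "k < ?p" for k
  proof (rule Suc.IH)
    fix z :: "nat \<Rightarrow> 'p mod_ring"
    define T where "T k = (\<Sum>l<?p ^ m. c (l * ?p + k) * (\<Prod>i<m. z i ^ (l div ?p ^ i mod ?p)))"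
      for k
    have "\<forall>k<?p. T k = 0"
    proof (rule sum_powers_vanishing_imp_coeffs_zero)
      fix t
      define y where "y = case_nat t z"
      have "0 = (\<Sum>j<?p ^ Suc m. c j * (\<Prod>i<Suc m. y i ^ (j div ?p ^ i mod ?p)))"
        using Suc.prems[of y] by simp
      also have "\<dots> = (\<Sum>k<?p. \<Sum>l<?p ^ m. c (l * ?p + k) *
                 (\<Prod>i<Suc m. y i ^ ((l * ?p + k) div ?p ^ i mod ?p)))"
        unfolding power_Suc2 by (rule sum_lessThan_mult_split)
      also have "\<dots> = (\<Sum>k<?p. T k * t ^ k)"
      proof (rule sum.cong[OF refl])
        fix k assume "k \<in> {..<?p}"
        then have k: "k < ?p" by simp
        have "(\<Prod>i<Suc m. y i ^ ((l * ?p + k) div ?p ^ i mod ?p)) =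
              t ^ k * (\<Prod>i<m. z i ^ (l div ?p ^ i mod ?p))" for l
          unfolding prod.lessThan_Suc_shift using digit_mult_add[OF k, of l] by (simp add: y_def)
        then show "(\<Sum>l<?p ^ m. c (l * ?p + k) *
              (\<Prod>i<Suc m. y i ^ ((l * ?p + k) div ?p ^ i mod ?p))) = T k * t ^ k"
          unfolding T_def sum_distrib_right by (simp add: ac_simps)
      qed
      finally show "(\<Sum>k<?p. T k * t ^ k) = 0" by simp
    qed
    then show "(\<Sum>l<?p ^ m. c (l * ?p + k) * (\<Prod>i<m. z i ^ (l div ?p ^ i mod ?p))) = 0"
      using k unfolding T_def by simp
  qed
  moreover have "j = j div ?p * ?p + j mod ?p" "j mod ?p < ?p" for j
    by simp_all
  moreover have "j div ?p < ?p ^ m" if "j < ?p ^ Suc m" for j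
    using that by (simp add: div_less_iff_less_mult mult.commute)
  ultimately show ?case by metis
qed

lemma det_digit_monomials_nonzero:
  fixes v :: "nat \<Rightarrow> nat \<Rightarrow> 'p::prime_card mod_ring"
  assumes surj: "\<And>y. \<exists>\<alpha><CARD('p) ^ m. \<forall>i<m. v \<alpha> i = y i"
  shows "det (mat (CARD('p) ^ m) (CARD('p) ^ m)
           (\<lambda>(\<alpha>, j). \<Prod>i<m. v \<alpha> i ^ (j div CARD('p) ^ i mod CARD('p)))) \<noteq> 0"
    (is "det ?M \<noteq> 0")
proof
  let ?N = "CARD('p) ^ m"
  assume "det ?M = 0"
  then obtain w where w: "w \<in> carrier_vec ?N" "w \<noteq> 0\<^sub>v ?N" "?M *\<^sub>v w = 0\<^sub>v ?N"
    using det_0_iff_vec_prod_zero_field[of ?M ?N] by auto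
  have "\<forall>j<?N. w $ j = 0"
  proof (rule digit_monomials_independent)
    fix y :: "nat \<Rightarrow> 'p mod_ring"
    obtain \<alpha> where \<alpha>: "\<alpha> < ?N" "\<forall>i<m. v \<alpha> i = y i" using surj by blast
    have "0 = (?M *\<^sub>v w) $ \<alpha>" using w(3) \<alpha>(1) by simp
    also have "\<dots> = (\<Sum>j<?N. w $ j * (\<Prod>i<m. y i ^ (j div CARD('p) ^ i mod CARD('p))))"
      using w(1) \<alpha> by (simp add: scalar_prod_def atLeast0LessThan mult.commute)
    finally show "(\<Sum>j<?N. w $ j * (\<Prod>i<m. y i ^ (j div CARD('p) ^ i mod CARD('p)))) = 0"
      by simp
  qed
  then have "w = 0\<^sub>v ?N" using w(1) by (intro eq_vecI) auto
  with w(2) show False by simp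
qed

lemma restrict_surj_if_inj_on_card_power:
  fixes v :: "nat \<Rightarrow> nat \<Rightarrow> 'a::finite"
  assumes "inj_on (\<lambda>\<alpha>. restrict (v \<alpha>) {..<m}) {..<CARD('a) ^ m}"
  shows "\<exists>\<alpha><CARD('a) ^ m. \<forall>i<m. v \<alpha> i = y i"
proof -
  let ?F = "\<lambda>\<alpha>. restrict (v \<alpha>) {..<m}" and ?S = "PiE {..<m} (\<lambda>_. UNIV :: 'a set)"
  have "?F ` {..<CARD('a) ^ m} \<subseteq> ?S" by (intro image_subsetI) (simp add: restrict_PiE_iff)
  moreover have "card (?F ` {..<CARD('a) ^ m}) = card ?S"
    using card_image[OF assms] by (simp add: card_PiE)
  ultimately have "?F ` {..<CARD('a) ^ m} = ?S" by (intro card_subset_eq) (simp_all add: finite_PiE)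
  then have "restrict y {..<m} \<in> ?F ` {..<CARD('a) ^ m}" by auto
  then obtain \<alpha> where "\<alpha> < CARD('a) ^ m" "restrict y {..<m} = ?F \<alpha>" by auto
  then show ?thesis by (metis lessThan_iff restrict_apply')
qed

lemma inj_on_delta_residues:
  fixes a :: "nat \<Rightarrow> 'p::prime_card padic"
  assumes "\<And>\<alpha>. \<alpha> < CARD('p) ^ m \<Longrightarrow> \<exists>c. a \<alpha> - of_nat \<alpha> = of_nat (CARD('p) ^ m) * c"
  shows "inj_on (\<lambda>\<alpha>. restrict (\<lambda>i. reduce_padic ((delta ^^ i) (a \<alpha>))) {..<m}) {..<CARD('p) ^ m}"
proof (rule inj_onI)
  fix \<alpha> \<beta>
  assume \<alpha>: "\<alpha> \<in> {..<CARD('p) ^ m}" and \<beta>: "\<beta> \<in> {..<CARD('p) ^ m}"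
    and eq: "restrict (\<lambda>i. reduce_padic ((delta ^^ i) (a \<alpha>))) {..<m}
      = restrict (\<lambda>i. reduce_padic ((delta ^^ i) (a \<beta>))) {..<m}"
  have "Rep_padic ((delta ^^ i) (a \<alpha>)) 1 = Rep_padic ((delta ^^ i) (a \<beta>)) 1" if "i < m" for i
    using fun_cong[OF eq, of i] that by (simp add: reduce_padic_eq_iff)
  then have "Rep_padic (a \<alpha>) m = Rep_padic (a \<beta>) m" by (rule Rep_padic_eq_if_delta_residues)
  with \<alpha> \<beta> assms show "\<alpha> = \<beta>"
    by (metis Rep_padic_eq_if_cong lessThan_iff of_nat_eq_iff)
qed

theorem lemma4p2:
  fixes m :: nat
    and a :: "nat \<Rightarrow> 'p::prime_card padic"
  assumes C: "\<And>\<alpha>. \<alpha> < CARD('p) ^ m \<Longrightarrow> (delta ^^ m) (a \<alpha>) = 0"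
      and cong: "\<And>\<alpha>. \<alpha> < CARD('p) ^ m \<Longrightarrow>
                    \<exists>c. a \<alpha> - of_nat \<alpha> = of_nat (CARD('p) ^ m) * c"
  shows "det (mat (CARD('p) ^ m) (CARD('p) ^ m)
           (\<lambda>(\<alpha>, j). \<Prod>i<m. ((delta ^^ i) (a \<alpha>)) ^ (j div CARD('p) ^ i mod CARD('p)))) dvd 1"
    (is "det ?W dvd 1")
proof -
  interpret reduce: comm_ring_hom "reduce_padic :: 'p padic \<Rightarrow> 'p mod_ring"
    by (rule reduce_padic_hom)
  define v where "v = (\<lambda>\<alpha> i. reduce_padic ((delta ^^ i) (a \<alpha>)))"
  have "inj_on (\<lambda>\<alpha>. restrict (v \<alpha>) {..<m}) {..<CARD('p) ^ m}"
    unfolding v_def by (rule inj_on_delta_residues) (rule cong)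
  then have surj: "\<exists>\<alpha><CARD('p) ^ m. \<forall>i<m. v \<alpha> i = y i" for y
    using restrict_surj_if_inj_on_card_power[of v m y] by simp
  have "map_mat reduce_padic ?W = mat (CARD('p) ^ m) (CARD('p) ^ m)
      (\<lambda>(\<alpha>, j). \<Prod>i<m. v \<alpha> i ^ (j div CARD('p) ^ i mod CARD('p)))"
    unfolding v_def by (rule eq_matI) (auto simp: reduce.hom_prod reduce.hom_power)
  then have "reduce_padic (det ?W) \<noteq> 0"
    using det_digit_monomials_nonzero[of m v, OF surj] by (simp add: reduce.hom_det[symmetric])
  then show ?thesis by (rule padic_unit_if_reduce_nonzero)
qed

end
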